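(* Let $U$ and $W$ be two normalized graphons. Then $d_{\mathrm{LP}}(D_U,D_W)\le\sqrt{2\,\delta_\square(U,W)}$.
   Context: A graphon over $(\Omega,\mathcal F,\pi)$ is a measurable symmetric $W:\Omega\times\Omega\to[0,\infty)$ with $\int W<\infty$; it is normalized if $\int W\,d\pi\,d\pi=1$. Its degrees are the random variable $W_x=\int_\Omega W(x,y)\,d\pi(y)$ with $x\sim\pi$, with distribution function $D_W(\lambda)=\pi(\{x:W_x\le\lambda\})$. The Lévy–Prokhorov distance between distribution functions is $d_{\mathrm{LP}}(D,D')=\inf\{\varepsilon>0:D'(\lambda-\varepsilon)-\varepsilon\le D(\lambda)\le D'(\lambda+\varepsilon)+\varepsilon\ \text{for all }\lambda\in\mathbb R\}$. For graphons $W$ on $(\Omega,\pi)$ and $W'$ on $(\Omega',\pi')$, $\delta_\square(W,W')=\inf_\nu\sup_{S,T}|\int_{S\times T}(W(x,y)-W'(x',y'))\,d\nu(x,x')\,d\nu(y,y')|$, the infimum over couplings $\nu$ of $\pi,\pi'$ and supremum over measurable $S,T\subseteq\Omega\times\Omega'$. *)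

theory Defs
  imports "HOL-Probability.Probability"
begin

definition graphon :: "'a measure \<Rightarrow> ('a \<Rightarrow> 'a \<Rightarrow> real) \<Rightarrow> bool" where
  "graphon M W \<longleftrightarrow>
     (\<lambda>(x, y). W x y) \<in> borel_measurable (M \<Otimes>\<^sub>M M) \<and>
     (\<forall>x\<in>space M. \<forall>y\<in>space M. 0 \<le> W x y \<and> W x y = W y x) \<and>
     integrable (M \<Otimes>\<^sub>M M) (\<lambda>(x, y). W x y)"

definition normalized_graphon :: "'a measure \<Rightarrow> ('a \<Rightarrow> 'a \<Rightarrow> real) \<Rightarrow> bool" where
  "normalized_graphon M W \<longleftrightarrow> graphon M W \<and> (\<integral>(x, y). W x y \<partial>(M \<Otimes>\<^sub>M M)) = 1"

definition degree :: "'a measure \<Rightarrow> ('a \<Rightarrow> 'a \<Rightarrow> real) \<Rightarrow> 'a \<Rightarrow> real" where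
  "degree M W x = (\<integral>y. W x y \<partial>M)"

definition degree_dist :: "'a measure \<Rightarrow> ('a \<Rightarrow> 'a \<Rightarrow> real) \<Rightarrow> real \<Rightarrow> real" where
  "degree_dist M W l = measure M {x \<in> space M. degree M W x \<le> l}"

definition dLP :: "(real \<Rightarrow> real) \<Rightarrow> (real \<Rightarrow> real) \<Rightarrow> real" where
  "dLP D D' = Inf {e. e > 0 \<and> (\<forall>l. D' (l - e) - e \<le> D l \<and> D l \<le> D' (l + e) + e)}"

definition coupling :: "'a measure \<Rightarrow> 'b measure \<Rightarrow> ('a \<times> 'b) measure \<Rightarrow> bool" where
  "coupling M M' \<nu> \<longleftrightarrow> sets \<nu> = sets (M \<Otimes>\<^sub>M M') \<and> distr \<nu> M fst = M \<and> distr \<nu> M' snd = M'"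

definition cut_term :: "('a \<Rightarrow> 'a \<Rightarrow> real) \<Rightarrow> ('b \<Rightarrow> 'b \<Rightarrow> real) \<Rightarrow> ('a \<times> 'b) measure
    \<Rightarrow> ('a \<times> 'b) set \<Rightarrow> ('a \<times> 'b) set \<Rightarrow> real" where
  "cut_term U W \<nu> S T =
     (\<integral>z. indicator S (fst z) * indicator T (snd z) *
            (U (fst (fst z)) (fst (snd z)) - W (snd (fst z)) (snd (snd z))) \<partial>(\<nu> \<Otimes>\<^sub>M \<nu>))"

definition cut_distance :: "'a measure \<Rightarrow> ('a \<Rightarrow> 'a \<Rightarrow> real) \<Rightarrow> 'b measure \<Rightarrow> ('b \<Rightarrow> 'b \<Rightarrow> real) \<Rightarrow> real" where
  "cut_distance M U M' W =
     Inf {Sup {\<bar>cut_term U W \<nu> S T\<bar> | S T. S \<in> sets (M \<Otimes>\<^sub>M M') \<and> T \<in> sets (M \<Otimes>\<^sub>M M')}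
          | \<nu>. coupling M M' \<nu>}"

end

(*
  Fix a coupling nu of the two vertex spaces. Taking T to be everything, the cut term of a set A
  of coupled vertex pairs integrates out the second vertex and becomes the integral over A of the
  degree difference U_x - W_x'. Markov's inequality applied to A = {U_x - W_x' > e} then gives
  e * nu(A) <= cut value of nu, and likewise for the opposite tail; so if that cut value is at most
  e^2, both tails have nu-measure at most e, which is exactly the coupling criterion for the two
  degree distribution functions to be within Levy-Prokhorov distance e. Optimising over nu yields
  d_LP <= sqrt delta, slightly better than sqrt (2 delta).
*)

theory Submission
  imports Defs
begin

lemma graphon_measurable:
  "graphon M U \<Longrightarrow> (\<lambda>(x, y). U x y) \<in> borel_measurable (M \<Otimes>\<^sub>M M)"
  and graphon_integrable:
  "graphon M U \<Longrightarrow> integrable (M \<Otimes>\<^sub>M M) (\<lambda>(x, y). U x y)"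
  unfolding graphon_def by auto

lemma measurable_degree:
  assumes "sigma_finite_measure M" and "graphon M U"
  shows "degree M U \<in> borel_measurable M"
proof -
  interpret sigma_finite_measure M by fact
  show ?thesis
    unfolding degree_def[abs_def]
    by (rule borel_measurable_lebesgue_integral) (use graphon_measurable[OF assms(2)] in simp)
qed

lemma integrable_degree:
  assumes "sigma_finite_measure M" and "graphon M U"
  shows "integrable M (degree M U)"
proof -
  interpret pair_sigma_finite M M
    using assms(1) by (simp add: pair_sigma_finite_def)
  show ?thesis
    using integrable_fst'[OF graphon_integrable[OF assms(2)]] by (simp add: degree_def[abs_def])
qed

lemma coupling_pair_measure:
  assumes "prob_space M" and "prob_space M'"
  shows "coupling M M' (M \<Otimes>\<^sub>M M')"
proof -
  interpret M: prob_space M by fact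
  interpret M': prob_space M' by fact
  have "distr (M \<Otimes>\<^sub>M M') M' snd = M'"
  proof (rule measure_eqI)
    fix A assume "A \<in> sets (distr (M \<Otimes>\<^sub>M M') M' snd)"
    then have A: "A \<in> sets M'" by simp
    then have "snd -` A \<inter> space (M \<Otimes>\<^sub>M M') = space M \<times> A"
      using sets.sets_into_space by (auto simp: space_pair_measure)
    with A show "emeasure (distr (M \<Otimes>\<^sub>M M') M' snd) A = emeasure M' A"
      by (simp add: emeasure_distr M'.emeasure_pair_measure_Times M.emeasure_space_1)
  qed simp
  then show ?thesis
    unfolding coupling_def using M'.distr_pair_fst by simp
qed

lemma (in finite_measure) mult_measure_le_integral_indicator:
  fixes g :: "'a \<Rightarrow> real"
  assumes "integrable M g" and A: "A \<in> sets M" and "\<And>x. x \<in> A \<Longrightarrow> c \<le> g x"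
  shows "c * measure M A \<le> (\<integral>x. indicator A x * g x \<partial>M)"
proof -
  have "A \<inter> space M = A"
    using sets.sets_into_space[OF A] by blast
  then have "c * measure M A = (\<integral>x. indicator A x * c \<partial>M)"
    by simp
  also have "\<dots> \<le> (\<integral>x. indicator A x * g x \<partial>M)"
  proof (rule integral_mono)
    show "integrable M (\<lambda>x. indicator A x * c)"
      using A by (simp add: integrable_real_indicator emeasure_finite less_top[symmetric])
    show "integrable M (\<lambda>x. indicator A x * g x)"
      using integrable_real_mult_indicator[OF A assms(1)] by (simp add: mult.commute)
  qed (use assms(3) in \<open>auto simp: indicator_def\<close>)
  finally show ?thesis .
qed

lemma (in finite_measure) measure_le_shift_le:
  fixes X Y :: "'a \<Rightarrow> real"
  assumes [measurable]: "X \<in> borel_measurable M" "Y \<in> borel_measurable M"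
  shows "measure M {x \<in> space M. Y x \<le> l - e}
    \<le> measure M {x \<in> space M. X x \<le> l} + measure M {x \<in> space M. e < X x - Y x}"
proof -
  have "measure M {x \<in> space M. Y x \<le> l - e}
      \<le> measure M ({x \<in> space M. X x \<le> l} \<union> {x \<in> space M. e < X x - Y x})"
    by (rule finite_measure_mono) auto
  also have "\<dots> \<le> measure M {x \<in> space M. X x \<le> l} + measure M {x \<in> space M. e < X x - Y x}"
    by (rule measure_subadditive) (simp_all add: emeasure_finite)
  finally show ?thesis .
qed

lemma dLP_le:
  assumes "0 \<le> s"
    and "\<And>e l. s < e \<Longrightarrow> D' (l - e) - e \<le> D l \<and> D l \<le> D' (l + e) + e"
  shows "dLP D D' \<le> s"
  unfolding dLP_def
proof (rule field_le_epsilon)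
  fix d :: real assume "0 < d"
  with assms show "Inf {e. e > 0 \<and> (\<forall>l. D' (l - e) - e \<le> D l \<and> D l \<le> D' (l + e) + e)} \<le> s + d"
    by (intro cInf_lower bdd_belowI[where m = 0]) auto
qed

locale prob_coupling = M: prob_space M + M': prob_space M'
  for M :: "'a measure" and M' :: "'b measure" +
  fixes \<nu> :: "('a \<times> 'b) measure"
  assumes coupling: "coupling M M' \<nu>"
begin

lemma sets_coupling: "sets \<nu> = sets (M \<Otimes>\<^sub>M M')"
  and distr_fst_coupling: "distr \<nu> M fst = M"
  and distr_snd_coupling: "distr \<nu> M' snd = M'"
  using coupling by (simp_all add: coupling_def)

lemma measurable_fst_coupling [measurable]: "fst \<in> \<nu> \<rightarrow>\<^sub>M M"
  and measurable_snd_coupling [measurable]: "snd \<in> \<nu> \<rightarrow>\<^sub>M M'"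
  by (simp_all add: measurable_cong_sets[OF sets_coupling refl])

lemma space_coupling: "space \<nu> = space M \<times> space M'"
  using sets_eq_imp_space_eq[OF sets_coupling] by (simp add: space_pair_measure)

sublocale prob_space \<nu>
proof
  have "fst -` space M \<inter> space \<nu> = space \<nu>"
    by (auto simp: space_coupling)
  then have "emeasure \<nu> (space \<nu>) = emeasure (distr \<nu> M fst) (space M)"
    by (simp add: emeasure_distr)
  then show "emeasure \<nu> (space \<nu>) = 1"
    by (simp add: distr_fst_coupling M.emeasure_space_1)
qed

lemma integral_fst_coupling:
  fixes f :: "'a \<Rightarrow> real"
  assumes "f \<in> borel_measurable M"
  shows "(\<integral>z. f (fst z) \<partial>\<nu>) = integral\<^sup>L M f"
  using integral_distr[OF measurable_fst_coupling assms] by (simp add: distr_fst_coupling)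

lemma integral_snd_coupling:
  fixes f :: "'b \<Rightarrow> real"
  assumes "f \<in> borel_measurable M'"
  shows "(\<integral>z. f (snd z) \<partial>\<nu>) = integral\<^sup>L M' f"
  using integral_distr[OF measurable_snd_coupling assms] by (simp add: distr_snd_coupling)

lemma integrable_fst_coupling:
  fixes f :: "'a \<Rightarrow> real"
  assumes "f \<in> borel_measurable M" and "integrable M f"
  shows "integrable \<nu> (\<lambda>z. f (fst z))"
  using integrable_distr_eq[OF measurable_fst_coupling assms(1)] assms(2)
  by (simp add: distr_fst_coupling)

lemma integrable_snd_coupling:
  fixes f :: "'b \<Rightarrow> real"
  assumes "f \<in> borel_measurable M'" and "integrable M' f"
  shows "integrable \<nu> (\<lambda>z. f (snd z))"
  using integrable_distr_eq[OF measurable_snd_coupling assms(1)] assms(2)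
  by (simp add: distr_snd_coupling)

lemma measure_fst_coupling:
  assumes "{x \<in> space M. P x} \<in> sets M"
  shows "measure \<nu> {z \<in> space \<nu>. P (fst z)} = measure M {x \<in> space M. P x}"
proof -
  have "fst -` {x \<in> space M. P x} \<inter> space \<nu> = {z \<in> space \<nu>. P (fst z)}"
    by (auto simp: space_coupling)
  then show ?thesis
    using measure_distr[OF measurable_fst_coupling assms] by (simp add: distr_fst_coupling)
qed

lemma measure_snd_coupling:
  assumes "{x \<in> space M'. P x} \<in> sets M'"
  shows "measure \<nu> {z \<in> space \<nu>. P (snd z)} = measure M' {x \<in> space M'. P x}"
proof -
  have "snd -` {x \<in> space M'. P x} \<inter> space \<nu> = {z \<in> space \<nu>. P (snd z)}"
    by (auto simp: space_coupling)
  then show ?thesis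
    using measure_distr[OF measurable_snd_coupling assms] by (simp add: distr_snd_coupling)
qed

lemma integrable_pair_fst_coupling:
  fixes f :: "'a \<Rightarrow> 'a \<Rightarrow> real"
  assumes "integrable (M \<Otimes>\<^sub>M M) (\<lambda>(x, y). f x y)"
  shows "integrable (\<nu> \<Otimes>\<^sub>M \<nu>) (\<lambda>z. f (fst (fst z)) (fst (snd z)))"
proof -
  have "distr (\<nu> \<Otimes>\<^sub>M \<nu>) (M \<Otimes>\<^sub>M M) (\<lambda>(x, y). (fst x, fst y)) = M \<Otimes>\<^sub>M M"
    using pair_measure_distr[OF measurable_fst_coupling measurable_fst_coupling]
    by (simp add: distr_fst_coupling M.sigma_finite_measure_axioms)
  with assms show ?thesis
    using integrable_distr_eq[of "\<lambda>(x, y). (fst x, fst y)" "\<nu> \<Otimes>\<^sub>M \<nu>" "M \<Otimes>\<^sub>M M"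
        "\<lambda>(x, y). f x y"]
    by (simp add: split_beta' borel_measurable_integrable)
qed

lemma integrable_pair_snd_coupling:
  fixes f :: "'b \<Rightarrow> 'b \<Rightarrow> real"
  assumes "integrable (M' \<Otimes>\<^sub>M M') (\<lambda>(x, y). f x y)"
  shows "integrable (\<nu> \<Otimes>\<^sub>M \<nu>) (\<lambda>z. f (snd (fst z)) (snd (snd z)))"
proof -
  have "distr (\<nu> \<Otimes>\<^sub>M \<nu>) (M' \<Otimes>\<^sub>M M') (\<lambda>(x, y). (snd x, snd y)) = M' \<Otimes>\<^sub>M M'"
    using pair_measure_distr[OF measurable_snd_coupling measurable_snd_coupling]
    by (simp add: distr_snd_coupling M'.sigma_finite_measure_axioms)
  with assms show ?thesis
    using integrable_distr_eq[of "\<lambda>(x, y). (snd x, snd y)" "\<nu> \<Otimes>\<^sub>M \<nu>" "M' \<Otimes>\<^sub>M M'"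
        "\<lambda>(x, y). f x y"]
    by (simp add: split_beta' borel_measurable_integrable)
qed

lemma integrable_indicator_pair_fst_coupling:
  fixes f :: "'a \<Rightarrow> 'a \<Rightarrow> real"
  assumes "integrable (M \<Otimes>\<^sub>M M) (\<lambda>(x, y). f x y)" and "A \<in> sets \<nu>"
  shows "integrable (\<nu> \<Otimes>\<^sub>M \<nu>) (\<lambda>z. indicator A (fst z) * f (fst (fst z)) (fst (snd z)))"
proof -
  have "integrable (\<nu> \<Otimes>\<^sub>M \<nu>) (\<lambda>z. indicator (A \<times> space \<nu>) z *\<^sub>R f (fst (fst z)) (fst (snd z)))"
    using assms by (intro integrable_mult_indicator integrable_pair_fst_coupling) simp_all
  then show ?thesis
    by (subst Bochner_Integration.integrable_cong[OF refl,
          where g = "\<lambda>z. indicator (A \<times> space \<nu>) z *\<^sub>R _ z"])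
      (auto simp: indicator_times space_pair_measure)
qed

lemma integrable_indicator_pair_snd_coupling:
  fixes f :: "'b \<Rightarrow> 'b \<Rightarrow> real"
  assumes "integrable (M' \<Otimes>\<^sub>M M') (\<lambda>(x, y). f x y)" and "A \<in> sets \<nu>"
  shows "integrable (\<nu> \<Otimes>\<^sub>M \<nu>) (\<lambda>z. indicator A (fst z) * f (snd (fst z)) (snd (snd z)))"
proof -
  have "integrable (\<nu> \<Otimes>\<^sub>M \<nu>) (\<lambda>z. indicator (A \<times> space \<nu>) z *\<^sub>R f (snd (fst z)) (snd (snd z)))"
    using assms by (intro integrable_mult_indicator integrable_pair_snd_coupling) simp_all
  then show ?thesis
    by (subst Bochner_Integration.integrable_cong[OF refl,
          where g = "\<lambda>z. indicator (A \<times> space \<nu>) z *\<^sub>R _ z"])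
      (auto simp: indicator_times space_pair_measure)
qed

lemma integral_indicator_pair_fst_coupling:
  fixes f :: "'a \<Rightarrow> 'a \<Rightarrow> real"
  assumes f: "integrable (M \<Otimes>\<^sub>M M) (\<lambda>(x, y). f x y)" and A: "A \<in> sets \<nu>"
  shows "(\<integral>z. indicator A (fst z) * f (fst (fst z)) (fst (snd z)) \<partial>(\<nu> \<Otimes>\<^sub>M \<nu>))
    = (\<integral>z. indicator A z * degree M f (fst z) \<partial>\<nu>)"
proof -
  interpret P: pair_sigma_finite \<nu> \<nu>
    by (simp add: pair_sigma_finite_def sigma_finite_measure_axioms)
  have "(\<integral>z. indicator A (fst z) * f (fst (fst z)) (fst (snd z)) \<partial>(\<nu> \<Otimes>\<^sub>M \<nu>))
      = (\<integral>z1. (\<integral>z2. indicator A z1 * f (fst z1) (fst z2) \<partial>\<nu>) \<partial>\<nu>)"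
    using integrable_indicator_pair_fst_coupling[OF f A] by (simp add: P.integral_fst'[symmetric])
  also have "\<dots> = (\<integral>z. indicator A z * degree M f (fst z) \<partial>\<nu>)"
  proof (rule Bochner_Integration.integral_cong)
    fix z1 assume "z1 \<in> space \<nu>"
    then have "(\<lambda>y. f (fst z1) y) \<in> borel_measurable M"
      using measurable_Pair2[OF borel_measurable_integrable[OF f]] by (auto simp: space_coupling)
    then show "(\<integral>z2. indicator A z1 * f (fst z1) (fst z2) \<partial>\<nu>) = indicator A z1 * degree M f (fst z1)"
      by (simp add: integral_fst_coupling degree_def)
  qed simp
  finally show ?thesis .
qed

lemma integral_indicator_pair_snd_coupling:
  fixes f :: "'b \<Rightarrow> 'b \<Rightarrow> real"
  assumes f: "integrable (M' \<Otimes>\<^sub>M M') (\<lambda>(x, y). f x y)" and A: "A \<in> sets \<nu>"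
  shows "(\<integral>z. indicator A (fst z) * f (snd (fst z)) (snd (snd z)) \<partial>(\<nu> \<Otimes>\<^sub>M \<nu>))
    = (\<integral>z. indicator A z * degree M' f (snd z) \<partial>\<nu>)"
proof -
  interpret P: pair_sigma_finite \<nu> \<nu>
    by (simp add: pair_sigma_finite_def sigma_finite_measure_axioms)
  have "(\<integral>z. indicator A (fst z) * f (snd (fst z)) (snd (snd z)) \<partial>(\<nu> \<Otimes>\<^sub>M \<nu>))
      = (\<integral>z1. (\<integral>z2. indicator A z1 * f (snd z1) (snd z2) \<partial>\<nu>) \<partial>\<nu>)"
    using integrable_indicator_pair_snd_coupling[OF f A] by (simp add: P.integral_fst'[symmetric])
  also have "\<dots> = (\<integral>z. indicator A z * degree M' f (snd z) \<partial>\<nu>)"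
  proof (rule Bochner_Integration.integral_cong)
    fix z1 assume "z1 \<in> space \<nu>"
    then have "(\<lambda>y. f (snd z1) y) \<in> borel_measurable M'"
      using measurable_Pair2[OF borel_measurable_integrable[OF f]] by (auto simp: space_coupling)
    then show "(\<integral>z2. indicator A z1 * f (snd z1) (snd z2) \<partial>\<nu>) = indicator A z1 * degree M' f (snd z1)"
      by (simp add: integral_snd_coupling degree_def)
  qed simp
  finally show ?thesis .
qed

end

definition coupling_cut_norm ::
    "('a \<Rightarrow> 'a \<Rightarrow> real) \<Rightarrow> ('b \<Rightarrow> 'b \<Rightarrow> real) \<Rightarrow> ('a \<times> 'b) measure \<Rightarrow> real" where
  "coupling_cut_norm U W \<nu> = Sup {\<bar>cut_term U W \<nu> S T\<bar> | S T. S \<in> sets \<nu> \<and> T \<in> sets \<nu>}"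

lemma cut_distance_eq_Inf_coupling_cut_norm:
  "cut_distance M U M' W = Inf {coupling_cut_norm U W \<nu> | \<nu>. coupling M M' \<nu>}"
  unfolding cut_distance_def coupling_cut_norm_def
  by (rule arg_cong[where f = Inf], intro Collect_cong ex_cong1) (auto simp: coupling_def)

locale graphon_coupling = prob_coupling +
  fixes U :: "'a \<Rightarrow> 'a \<Rightarrow> real" and W :: "'b \<Rightarrow> 'b \<Rightarrow> real"
  assumes graphon_U: "graphon M U" and graphon_W: "graphon M' W"
begin

definition degree_gap :: "'a \<times> 'b \<Rightarrow> real" where
  "degree_gap z = degree M U (fst z) - degree M' W (snd z)"

lemma measurable_degree_fst [measurable]: "(\<lambda>z. degree M U (fst z)) \<in> borel_measurable \<nu>"
  and measurable_degree_snd [measurable]: "(\<lambda>z. degree M' W (snd z)) \<in> borel_measurable \<nu>"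
  using measurable_degree[OF M.sigma_finite_measure_axioms graphon_U]
    measurable_degree[OF M'.sigma_finite_measure_axioms graphon_W]
  by measurable

lemma integrable_degree_fst: "integrable \<nu> (\<lambda>z. degree M U (fst z))"
  and integrable_degree_snd: "integrable \<nu> (\<lambda>z. degree M' W (snd z))"
  by (intro integrable_fst_coupling integrable_snd_coupling measurable_degree integrable_degree
      graphon_U graphon_W M.sigma_finite_measure_axioms M'.sigma_finite_measure_axioms)+

lemma measurable_degree_gap [measurable]: "degree_gap \<in> borel_measurable \<nu>"
  unfolding degree_gap_def[abs_def] by measurable

lemma integrable_degree_gap: "integrable \<nu> degree_gap"
  unfolding degree_gap_def[abs_def]
  using integrable_degree_fst integrable_degree_snd by (rule Bochner_Integration.integrable_diff)

lemma integrable_cut_integrand: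
  assumes "S \<in> sets \<nu>" and "T \<in> sets \<nu>"
  shows "integrable (\<nu> \<Otimes>\<^sub>M \<nu>) (\<lambda>z. indicator S (fst z) * indicator T (snd z) *
           (U (fst (fst z)) (fst (snd z)) - W (snd (fst z)) (snd (snd z))))"
proof -
  have "integrable (\<nu> \<Otimes>\<^sub>M \<nu>) (\<lambda>z. indicator (S \<times> T) z *\<^sub>R
           (U (fst (fst z)) (fst (snd z)) - W (snd (fst z)) (snd (snd z))))"
    using assms by (intro integrable_mult_indicator Bochner_Integration.integrable_diff
        integrable_pair_fst_coupling integrable_pair_snd_coupling
        graphon_integrable graphon_U graphon_W) simp
  then show ?thesis
    by (simp add: indicator_times)
qed

lemma abs_cut_term_le_integral:
  assumes "S \<in> sets \<nu>" and "T \<in> sets \<nu>"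
  shows "\<bar>cut_term U W \<nu> S T\<bar>
    \<le> (\<integral>z. \<bar>U (fst (fst z)) (fst (snd z))\<bar> + \<bar>W (snd (fst z)) (snd (snd z))\<bar> \<partial>(\<nu> \<Otimes>\<^sub>M \<nu>))"
proof -
  have "\<bar>cut_term U W \<nu> S T\<bar> \<le> (\<integral>z. \<bar>indicator S (fst z) * indicator T (snd z) *
           (U (fst (fst z)) (fst (snd z)) - W (snd (fst z)) (snd (snd z)))\<bar> \<partial>(\<nu> \<Otimes>\<^sub>M \<nu>))"
    unfolding cut_term_def by (rule integral_abs_bound)
  also have "\<dots> \<le> (\<integral>z. \<bar>U (fst (fst z)) (fst (snd z))\<bar> + \<bar>W (snd (fst z)) (snd (snd z))\<bar> \<partial>(\<nu> \<Otimes>\<^sub>M \<nu>))"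
    using integrable_pair_fst_coupling[OF graphon_integrable[OF graphon_U]]
      integrable_pair_snd_coupling[OF graphon_integrable[OF graphon_W]]
    by (intro integral_mono integrable_abs integrable_cut_integrand assms)
      (auto simp: indicator_def)
  finally show ?thesis .
qed

lemma abs_cut_term_le_coupling_cut_norm:
  assumes "S \<in> sets \<nu>" and "T \<in> sets \<nu>"
  shows "\<bar>cut_term U W \<nu> S T\<bar> \<le> coupling_cut_norm U W \<nu>"
  unfolding coupling_cut_norm_def
  using assms abs_cut_term_le_integral by (intro cSup_upper bdd_aboveI) auto

lemma coupling_cut_norm_nonneg: "0 \<le> coupling_cut_norm U W \<nu>"
  using abs_cut_term_le_coupling_cut_norm[of "{}" "{}"] by (simp add: cut_term_def)

lemma cut_term_space_eq:
  assumes A: "A \<in> sets \<nu>"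
  shows "cut_term U W \<nu> A (space \<nu>) = (\<integral>z. indicator A z * degree_gap z \<partial>\<nu>)"
proof -
  note U = graphon_integrable[OF graphon_U] and W = graphon_integrable[OF graphon_W]
  have "cut_term U W \<nu> A (space \<nu>)
      = (\<integral>z. indicator A (fst z) * U (fst (fst z)) (fst (snd z))
            - indicator A (fst z) * W (snd (fst z)) (snd (snd z)) \<partial>(\<nu> \<Otimes>\<^sub>M \<nu>))"
    unfolding cut_term_def
    by (rule Bochner_Integration.integral_cong) (auto simp: space_pair_measure algebra_simps)
  also have "\<dots> = (\<integral>z. indicator A z * degree M U (fst z) \<partial>\<nu>)
      - (\<integral>z. indicator A z * degree M' W (snd z) \<partial>\<nu>)"
    using integrable_indicator_pair_fst_coupling[OF U A] integrable_indicator_pair_snd_coupling[OF W A]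
    by (simp add: integral_indicator_pair_fst_coupling[OF U A] integral_indicator_pair_snd_coupling[OF W A])
  also have "\<dots> = (\<integral>z. indicator A z * degree_gap z \<partial>\<nu>)"
    using integrable_real_mult_indicator[OF A integrable_degree_fst]
      integrable_real_mult_indicator[OF A integrable_degree_snd]
    by (simp add: degree_gap_def right_diff_distrib mult.commute)
  finally show ?thesis .
qed

lemma mult_measure_degree_gap_le_coupling_cut_norm:
  "e * measure \<nu> {z \<in> space \<nu>. e < degree_gap z} \<le> coupling_cut_norm U W \<nu>"
  "e * measure \<nu> {z \<in> space \<nu>. degree_gap z < - e} \<le> coupling_cut_norm U W \<nu>"
proof -
  let ?A = "{z \<in> space \<nu>. e < degree_gap z}" and ?B = "{z \<in> space \<nu>. degree_gap z < - e}"
  have A: "?A \<in> sets \<nu>" and B: "?B \<in> sets \<nu>"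
    by measurable
  have "e * measure \<nu> ?A \<le> (\<integral>z. indicator ?A z * degree_gap z \<partial>\<nu>)"
    by (rule mult_measure_le_integral_indicator[OF integrable_degree_gap A]) auto
  also have "\<dots> = cut_term U W \<nu> ?A (space \<nu>)"
    by (rule cut_term_space_eq[OF A, symmetric])
  also have "\<dots> \<le> coupling_cut_norm U W \<nu>"
    using abs_cut_term_le_coupling_cut_norm[OF A sets.top] by linarith
  finally show "e * measure \<nu> ?A \<le> coupling_cut_norm U W \<nu>" .
  have "e * measure \<nu> ?B \<le> (\<integral>z. indicator ?B z * - degree_gap z \<partial>\<nu>)"
    by (rule mult_measure_le_integral_indicator[OF integrable_minus[OF integrable_degree_gap] B]) auto
  also have "\<dots> = - cut_term U W \<nu> ?B (space \<nu>)"
    by (simp add: cut_term_space_eq[OF B])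
  also have "\<dots> \<le> coupling_cut_norm U W \<nu>"
    using abs_cut_term_le_coupling_cut_norm[OF B sets.top] by linarith
  finally show "e * measure \<nu> ?B \<le> coupling_cut_norm U W \<nu>" .
qed

lemma degree_dist_eq_measure_coupling:
  "degree_dist M U l = measure \<nu> {z \<in> space \<nu>. degree M U (fst z) \<le> l}"
  "degree_dist M' W l = measure \<nu> {z \<in> space \<nu>. degree M' W (snd z) \<le> l}"
proof -
  have [measurable]: "degree M U \<in> borel_measurable M" "degree M' W \<in> borel_measurable M'"
    using measurable_degree graphon_U graphon_W M.sigma_finite_measure_axioms
      M'.sigma_finite_measure_axioms by blast+
  show "degree_dist M U l = measure \<nu> {z \<in> space \<nu>. degree M U (fst z) \<le> l}"
    unfolding degree_dist_def by (rule measure_fst_coupling[symmetric]) measurable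
  show "degree_dist M' W l = measure \<nu> {z \<in> space \<nu>. degree M' W (snd z) \<le> l}"
    unfolding degree_dist_def by (rule measure_snd_coupling[symmetric]) measurable
qed

lemma degree_dist_close:
  assumes "0 < e" and "coupling_cut_norm U W \<nu> \<le> e\<^sup>2"
  shows "degree_dist M' W (l - e) - e \<le> degree_dist M U l"
    and "degree_dist M U l \<le> degree_dist M' W (l + e) + e"
proof -
  have "e * measure \<nu> {z \<in> space \<nu>. e < degree_gap z} \<le> e * e"
    and "e * measure \<nu> {z \<in> space \<nu>. degree_gap z < - e} \<le> e * e"
    using order_trans[OF mult_measure_degree_gap_le_coupling_cut_norm(1) assms(2)]
      order_trans[OF mult_measure_degree_gap_le_coupling_cut_norm(2) assms(2)]
    by (simp_all add: power2_eq_square)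
  then have gt: "measure \<nu> {z \<in> space \<nu>. e < degree M U (fst z) - degree M' W (snd z)} \<le> e"
    and lt: "measure \<nu> {z \<in> space \<nu>. e < degree M' W (snd z) - degree M U (fst z)} \<le> e"
    using \<open>0 < e\<close> by (auto simp: degree_gap_def algebra_simps)
  show "degree_dist M' W (l - e) - e \<le> degree_dist M U l"
    using measure_le_shift_le[of "\<lambda>z. degree M U (fst z)" "\<lambda>z. degree M' W (snd z)" l e] gt
    by (simp add: degree_dist_eq_measure_coupling)
  show "degree_dist M U l \<le> degree_dist M' W (l + e) + e"
    using measure_le_shift_le[of "\<lambda>z. degree M' W (snd z)" "\<lambda>z. degree M U (fst z)" "l + e" e] lt
    by (simp add: degree_dist_eq_measure_coupling)
qed

end

lemma graphon_couplingI:
  assumes "prob_space M" and "prob_space M'" and "graphon M U" and "graphon M' W"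
    and "coupling M M' \<nu>"
  shows "graphon_coupling M M' \<nu> U W"
  using assms by (simp add: graphon_coupling_def graphon_coupling_axioms_def prob_coupling_def
      prob_coupling_axioms_def)

lemma cut_distance_nonneg:
  assumes "prob_space M" and "prob_space M'" and "graphon M U" and "graphon M' W"
  shows "0 \<le> cut_distance M U M' W"
  unfolding cut_distance_eq_Inf_coupling_cut_norm
  using coupling_pair_measure[OF assms(1,2)]
    graphon_coupling.coupling_cut_norm_nonneg[OF graphon_couplingI[OF assms]]
  by (intro cInf_greatest) auto

lemma dLP_degree_dist_le_sqrt_cut_distance:
  assumes "prob_space M" and "prob_space M'" and "graphon M U" and "graphon M' W"
  shows "dLP (degree_dist M U) (degree_dist M' W) \<le> sqrt (cut_distance M U M' W)"
proof (rule dLP_le)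
  let ?K = "{coupling_cut_norm U W \<nu> | \<nu>. coupling M M' \<nu>}"
  have nonneg: "0 \<le> cut_distance M U M' W"
    using cut_distance_nonneg[OF assms] .
  then show "0 \<le> sqrt (cut_distance M U M' W)"
    by simp
  fix e l assume e: "sqrt (cut_distance M U M' W) < e"
  then have "0 < e"
    using real_sqrt_ge_zero[OF nonneg] by linarith
  have "Inf ?K = (sqrt (cut_distance M U M' W))\<^sup>2"
    unfolding cut_distance_eq_Inf_coupling_cut_norm[symmetric] using real_sqrt_pow2[OF nonneg] ..
  also have "\<dots> < e\<^sup>2"
    using e real_sqrt_ge_zero[OF nonneg] by (rule power_strict_mono) simp
  finally have "Inf ?K < e\<^sup>2" .
  moreover have "?K \<noteq> {}"
    using coupling_pair_measure[OF assms(1,2)] by auto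
  ultimately have "\<exists>k \<in> ?K. k < e\<^sup>2"
    by (intro cInf_lessD)
  then obtain \<nu> where \<nu>: "coupling M M' \<nu>" and cut: "coupling_cut_norm U W \<nu> < e\<^sup>2"
    by auto
  interpret graphon_coupling M M' \<nu> U W
    using graphon_couplingI[OF assms \<nu>] .
  show "degree_dist M' W (l - e) - e \<le> degree_dist M U l \<and> degree_dist M U l \<le> degree_dist M' W (l + e) + e"
    using degree_dist_close[OF \<open>0 < e\<close> less_imp_le[OF cut]] by blast
qed

theorem theorem2p16:
  fixes M :: "'a measure" and M' :: "'b measure"
    and U :: "'a \<Rightarrow> 'a \<Rightarrow> real" and W :: "'b \<Rightarrow> 'b \<Rightarrow> real"
  assumes "prob_space M" and "prob_space M'"
    and "normalized_graphon M U" and "normalized_graphon M' W"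
  shows "dLP (degree_dist M U) (degree_dist M' W) \<le> sqrt (2 * cut_distance M U M' W)"
proof -
  have graphons: "graphon M U" "graphon M' W"
    using assms(3,4) by (simp_all add: normalized_graphon_def)
  have "dLP (degree_dist M U) (degree_dist M' W) \<le> sqrt (cut_distance M U M' W)"
    using dLP_degree_dist_le_sqrt_cut_distance[OF assms(1,2) graphons] .
  also have "\<dots> \<le> sqrt (2 * cut_distance M U M' W)"
    using cut_distance_nonneg[OF assms(1,2) graphons] by simp
  finally show ?thesis .
qed

end
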